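(* For each $k\in\mathbb N$, there is a bilabelled graph in $\mathcal P_k$ whose underlying graph is the $k\times k$ grid.
   Context: A $(k,k)$-bilabelled graph is $\boldsymbol F=(F,\boldsymbol u,\boldsymbol v)$, $\boldsymbol u,\boldsymbol v\in V(F)^k$, with underlying graph $F$. Series composition $\boldsymbol F\cdot\boldsymbol F'$: disjoint union with $v_i$ identified with $u'_i$, multiple edges removed, labels $(\boldsymbol u,\boldsymbol v')$. Parallel composition $\boldsymbol F\odot\boldsymbol F'$: identify $u_i$ with $u'_i$, $v_i$ with $v'_i$, multiple edges removed. For $\sigma\in\mathfrak S_{2k}$, $\boldsymbol F^\sigma$ has in-labels $(w_{\sigma(1)},\dots,w_{\sigma(k)})$, out-labels $(w_{\sigma(k+1)},\dots,w_{\sigma(2k)})$, $\boldsymbol w=\boldsymbol u\boldsymbol v$. $\mathscr C_k$ = cyclic group of rotations of $(1,\dots,k,2k,\dots,k+1)$. Bilabelled minors: via edge contraction, edge deletion, deletion of unlabelled vertices. $\boldsymbol C_k$: vertices $[2k]$, in-labels $(1,\dots,k)$, out-labels $(k+1,\dots,2k)$, edges $\{i,i+1\}$ ($i\in[2k]\setminus\{k,2k\}$), $\{1,k+1\},\{k,2k\}$; $\boldsymbol M_k$: same vertices/labels, edges $\{i,i+k\}$. $\mathcal Q_k^P,\mathcal Q_k^S$ = bilabelled minors of $\boldsymbol C_k,\boldsymbol M_k$; $\mathcal Q_k$ their union. $\mathcal P_k$ = smallest class containing $\mathcal Q_k$, closed under series composition, $\boldsymbol F\mapsto\boldsymbol F\odot\boldsymbol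 Q$ ($\boldsymbol Q\in\mathcal Q_k^P$), and $\boldsymbol F\mapsto\boldsymbol F^\sigma$ ($\sigma\in\mathscr C_k$). *)

theory Defs
  imports Main
begin

text \<open>Bilabelled graphs: vertex set, edge set (edges are vertex sets of size 1 or 2;
size 1 = loop, which may arise from identifications), in-labels, out-labels.
Labels need not be distinct. Positions are 0-indexed.\<close>

datatype 'a blg = BLG (bverts: "'a set") (bedges: "'a set set") (bin: "'a list") (bout: "'a list")

definition blg_iso :: "'a blg \<Rightarrow> 'b blg \<Rightarrow> bool" where
  "blg_iso F G \<longleftrightarrow> (\<exists>f. bij_betw f (bverts F) (bverts G)
      \<and> bedges G = (image f) ` bedges F
      \<and> bin G = map f (bin F) \<and> bout G = map f (bout F))"

text \<open>Gluing of two bilabelled graphs along the equivalence relation generated by the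
pairs P on the disjoint union; the identification map h realises the quotient.
Multiple edges disappear automatically since edges form a set.\<close>
definition glue :: "'a blg \<Rightarrow> 'a blg \<Rightarrow> (('a + 'a) \<times> ('a + 'a)) set
     \<Rightarrow> 'a blg \<Rightarrow> (('a + 'a) \<Rightarrow> 'a) \<Rightarrow> bool" where
  "glue F F' P H h \<longleftrightarrow>
     bverts H = h ` (bverts F <+> bverts F')
   \<and> (\<forall>x\<in>bverts F <+> bverts F'. \<forall>y\<in>bverts F <+> bverts F'.
          h x = h y \<longleftrightarrow> (x, y) \<in> (P \<union> P\<inverse>)\<^sup>*)
   \<and> bedges H = (image h) ` ((image Inl) ` bedges F \<union> (image Inr) ` bedges F')"

definition series :: "'a blg \<Rightarrow> 'a blg \<Rightarrow> 'a blg \<Rightarrow> bool" where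
  "series F F' H \<longleftrightarrow> (\<exists>h. glue F F' (set (zip (map Inl (bout F)) (map Inr (bin F')))) H h
      \<and> bin H = map (h \<circ> Inl) (bin F) \<and> bout H = map (h \<circ> Inr) (bout F'))"

definition parallel :: "'a blg \<Rightarrow> 'a blg \<Rightarrow> 'a blg \<Rightarrow> bool" where
  "parallel F F' H \<longleftrightarrow> (\<exists>h. glue F F'
        (set (zip (map Inl (bin F)) (map Inr (bin F'))) \<union> set (zip (map Inl (bout F)) (map Inr (bout F')))) H h
      \<and> bin H = map (h \<circ> Inl) (bin F) \<and> bout H = map (h \<circ> Inl) (bout F))"

text \<open>F^\<sigma> for a permutation \<sigma> of {0..<2k} (0-indexed positions of w = uv).\<close>
definition permute :: "nat \<Rightarrow> (nat \<Rightarrow> nat) \<Rightarrow> 'a blg \<Rightarrow> 'a blg" where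
  "permute k \<sigma> F = (let w = bin F @ bout F in
     BLG (bverts F) (bedges F) (map (\<lambda>i. w ! \<sigma> i) [0..<k]) (map (\<lambda>i. w ! \<sigma> (k + i)) [0..<k]))"

text \<open>The cyclic order (1,...,k,2k,...,k+1), 0-indexed: position j holds cyc_at k j,
and cyc_pos k is its inverse.  rot k r is the rotation by r steps; the group
\<C>_k consists of rot k r for r < 2k.\<close>
definition cyc_at :: "nat \<Rightarrow> nat \<Rightarrow> nat" where
  "cyc_at k j = (if j < k then j else 3 * k - 1 - j)"
definition cyc_pos :: "nat \<Rightarrow> nat \<Rightarrow> nat" where
  "cyc_pos k i = (if i < k then i else 3 * k - 1 - i)"
definition rot :: "nat \<Rightarrow> nat \<Rightarrow> nat \<Rightarrow> nat" where
  "rot k r i = cyc_at k ((cyc_pos k i + r) mod (2 * k))"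

definition contract_edge :: "'a blg \<Rightarrow> 'a \<Rightarrow> 'a \<Rightarrow> 'a blg" where
  "contract_edge F a b = (let f = (\<lambda>x. if x = b then a else x) in
     BLG (bverts F - {b}) ((image f) ` (bedges F - {{a, b}})) (map f (bin F)) (map f (bout F)))"

inductive minor_step :: "'a blg \<Rightarrow> 'a blg \<Rightarrow> bool" where
  contr: "{a, b} \<in> bedges F \<Longrightarrow> a \<noteq> b \<Longrightarrow> minor_step F (contract_edge F a b)"
| del_edge: "e \<in> bedges F \<Longrightarrow> minor_step F (BLG (bverts F) (bedges F - {e}) (bin F) (bout F))"
| del_vert: "x \<in> bverts F \<Longrightarrow> x \<notin> set (bin F) \<Longrightarrow> x \<notin> set (bout F) \<Longrightarrow>
     minor_step F (BLG (bverts F - {x}) {e \<in> bedges F. x \<notin> e} (bin F) (bout F))"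

definition bl_minor :: "'a blg \<Rightarrow> 'b blg \<Rightarrow> bool" where
  "bl_minor G H \<longleftrightarrow> (\<exists>G'. minor_step\<^sup>*\<^sup>* G G' \<and> blg_iso G' H)"

definition Cgraph :: "nat \<Rightarrow> nat blg" where
  "Cgraph k = BLG {0..<2*k}
     ({{i, i+1} | i. i + 1 < 2*k \<and> i \<noteq> k - 1} \<union> (if k = 0 then {} else {{0, k}, {k - 1, 2*k - 1}}))
     [0..<k] [k..<2*k]"

definition Mgraph :: "nat \<Rightarrow> nat blg" where
  "Mgraph k = BLG {0..<2*k} {{i, i+k} | i. i < k} [0..<k] [k..<2*k]"

definition inQP :: "nat \<Rightarrow> nat blg \<Rightarrow> bool" where
  "inQP k F \<longleftrightarrow> bl_minor (Cgraph k) F"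
definition inQS :: "nat \<Rightarrow> nat blg \<Rightarrow> bool" where
  "inQS k F \<longleftrightarrow> bl_minor (Mgraph k) F"

inductive inP :: "nat \<Rightarrow> nat blg \<Rightarrow> bool" for k where
  base: "inQP k F \<or> inQS k F \<Longrightarrow> inP k F"
| ser: "inP k F \<Longrightarrow> inP k F' \<Longrightarrow> series F F' H \<Longrightarrow> inP k H"
| par: "inP k F \<Longrightarrow> inQP k Q \<Longrightarrow> parallel F Q H \<Longrightarrow> inP k H"
| perm: "inP k F \<Longrightarrow> r < 2 * k \<Longrightarrow> inP k (permute k (rot k r) F)"

definition grid_verts :: "nat \<Rightarrow> (nat \<times> nat) set" where
  "grid_verts k = {0..<k} \<times> {0..<k}"
definition grid_edges :: "nat \<Rightarrow> (nat \<times> nat) set set" where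
  "grid_edges k = {{(a, b), (c, d)} | a b c d. (a, b) \<in> grid_verts k \<and> (c, d) \<in> grid_verts k
      \<and> ((a = c \<and> b + 1 = d) \<or> (b = d \<and> a + 1 = c))}"

end

theory Submission
  imports Defs
begin

(* The k x k grid is assembled row by row. Deleting the two edges of C_k that close its
   cycle leaves two paths; their parallel composition with the matching M_k is the 2 x k grid,
   in-labelled along its first row and out-labelled along its last. Series composition glues
   the last row of one such grid to the first row of the next, so an (m + 1)-row grid composed
   with an (n + 1)-row grid is the (m + n + 1)-row grid. For k <= 1 the grid is a minor of M_k. *)

lemma rtrancl_sym_bipartite_matching:
  assumes "P \<subseteq> range Inl \<times> range Inr" and "single_valued P" and "single_valued (P\<inverse>)"
  shows "(P \<union> P\<inverse>)\<^sup>* = Id \<union> P \<union> P\<inverse>"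
proof
  show "(P \<union> P\<inverse>)\<^sup>* \<subseteq> Id \<union> P \<union> P\<inverse>"
  proof (rule subrelI)
    fix x y assume "(x, y) \<in> (P \<union> P\<inverse>)\<^sup>*"
    then show "(x, y) \<in> Id \<union> P \<union> P\<inverse>"
    proof (induction rule: rtrancl_induct)
      case base
      show ?case by simp
    next
      case (step y z)
      with assms show ?case
        unfolding single_valued_def by blast
    qed
  qed
qed auto

lemma glue_matchingI:
  assumes "P \<subseteq> range Inl \<times> range Inr" and "single_valued P" and "single_valued (P\<inverse>)"
    and "bverts H = h ` (bverts F <+> bverts F')"
    and "\<And>x y. x \<in> bverts F <+> bverts F' \<Longrightarrow> y \<in> bverts F <+> bverts F' \<Longrightarrow>
           h x = h y \<longleftrightarrow> x = y \<or> (x, y) \<in> P \<or> (y, x) \<in> P"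
    and "bedges H = image (h \<circ> Inl) ` bedges F \<union> image (h \<circ> Inr) ` bedges F'"
  shows "glue F F' P H h"
  using assms rtrancl_sym_bipartite_matching[OF assms(1-3)]
  unfolding glue_def by (simp add: image_Un image_comp)

lemma set_zip_Inl_Inr_upt:
  assumes "c' - c = d' - d"
  shows "set (zip (map Inl [c..<c']) (map Inr [d..<d']))
           = (\<lambda>i. (Inl (c + i), Inr (d + i))) ` {..<c' - c}"
  using assms by (force simp: set_zip)

lemma blg_iso_refl: "blg_iso F F"
  unfolding blg_iso_def by (auto intro!: exI[of _ id])

lemma bl_minorI: "minor_step\<^sup>*\<^sup>* G H \<Longrightarrow> bl_minor G H"
  unfolding bl_minor_def using blg_iso_refl by blast

lemma minor_delete_edges:
  assumes "finite D" and "D \<subseteq> bedges F"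
  shows "minor_step\<^sup>*\<^sup>* F (BLG (bverts F) (bedges F - D) (bin F) (bout F))"
  using assms
proof (induction D rule: finite_induct)
  case empty
  show ?case by (cases F) simp
next
  case (insert e D)
  let ?G = "BLG (bverts F) (bedges F - D) (bin F) (bout F)"
  have "minor_step ?G (BLG (bverts F) (bedges F - D - {e}) (bin F) (bout F))"
    using minor_step.del_edge[of e ?G] insert by simp
  moreover have "bedges F - insert e D = bedges F - D - {e}" by blast
  ultimately show ?case
    using insert by (metis rtranclp.rtrancl_into_rtrancl insert_subset)
qed

(* Vertex a * k + b stands for the grid point in row a and column b. *)
definition stacked_edges :: "nat \<Rightarrow> nat \<Rightarrow> nat \<Rightarrow> nat \<Rightarrow> nat set set" where
  "stacked_edges k w d r = {{a * k + b, a * k + b + d} | a b. a < r \<and> b < w}"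

abbreviation row_edges :: "nat \<Rightarrow> nat \<Rightarrow> nat set set" where
  "row_edges k r \<equiv> stacked_edges k (k - 1) 1 r"

abbreviation column_edges :: "nat \<Rightarrow> nat \<Rightarrow> nat set set" where
  "column_edges k r \<equiv> stacked_edges k k k r"

lemma stacked_edges_mono: "r \<le> s \<Longrightarrow> stacked_edges k w d r \<subseteq> stacked_edges k w d s"
  unfolding stacked_edges_def by fastforce

lemma stacked_edges_add:
  "stacked_edges k w d (r + s)
     = stacked_edges k w d r \<union> image ((+) (r * k)) ` stacked_edges k w d s"
  (is "?E (r + s) = ?E r \<union> ?shift (?E s)")
proof
  show "?E (r + s) \<subseteq> ?E r \<union> ?shift (?E s)"
  proof
    fix e assume "e \<in> ?E (r + s)"
    then obtain a b where e: "e = {a * k + b, a * k + b + d}" "a < r + s" "b < w"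
      unfolding stacked_edges_def by blast
    show "e \<in> ?E r \<union> ?shift (?E s)"
    proof (cases "a < r")
      case True
      with e show ?thesis unfolding stacked_edges_def by blast
    next
      case False
      then obtain a' where "a = r + a'" using le_Suc_ex not_less by blast
      with e have "e = (+) (r * k) ` {a' * k + b, a' * k + b + d}" "a' < s"
        by (simp_all add: algebra_simps)
      with e show ?thesis unfolding stacked_edges_def by blast
    qed
  qed
next
  have "(+) (r * k) ` {a * k + b, a * k + b + d} = {(r + a) * k + b, (r + a) * k + b + d}" for a b
    by (simp add: algebra_simps)
  then show "?E r \<union> ?shift (?E s) \<subseteq> ?E (r + s)"
    using stacked_edges_mono[of r "r + s" k w d] unfolding stacked_edges_def by fastforce
qed

lemma image_setcompr_cong:
  "(\<And>a b. P a b \<Longrightarrow> F (g a b) = g' a b) \<Longrightarrow>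
     F ` {g a b | a b. P a b} = {g' a b | a b. P a b}"
  by force

lemma div_mod_mult_add: "(b::nat) < k \<Longrightarrow> ((a * k + b) div k, (a * k + b) mod k) = (a, b)"
  by simp

lemma div_mod_row_edges:
  "image (\<lambda>n. (n div k, n mod k)) ` row_edges k r
     = {{(a, b), (a, b + 1)} | a b. a < r \<and> b + 1 < k}"
proof -
  let ?f = "\<lambda>n. (n div k, n mod k)"
  have "row_edges k r = {{a * k + b, a * k + b + 1} | a b. a < r \<and> b + 1 < k}"
    unfolding stacked_edges_def by (metis less_diff_conv)
  moreover have "image ?f ` {{a * k + b, a * k + b + 1} | a b. a < r \<and> b + 1 < k}
      = {{(a, b), (a, b + 1)} | a b. a < r \<and> b + 1 < k}"
  proof (rule image_setcompr_cong)
    fix a b assume "a < r \<and> b + 1 < k"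
    then show "?f ` {a * k + b, a * k + b + 1} = {(a, b), (a, b + 1)}"
      using div_mod_mult_add[of "b + 1" k a] by (simp add: add.assoc)
  qed
  ultimately show ?thesis by simp
qed

lemma div_mod_column_edges:
  "image (\<lambda>n. (n div k, n mod k)) ` column_edges k r
     = {{(a, b), (a + 1, b)} | a b. a < r \<and> b < k}"
  unfolding stacked_edges_def
proof (rule image_setcompr_cong)
  fix a b assume "a < r \<and> b < k"
  then show "(\<lambda>n. (n div k, n mod k)) ` {a * k + b, a * k + b + k} = {(a, b), (a + 1, b)}"
    using div_mod_mult_add[of b k "a + 1"] by (simp add: algebra_simps)
qed

definition grid_blg :: "nat \<Rightarrow> nat \<Rightarrow> nat blg" where
  "grid_blg k m = BLG {0..<(m + 1) * k} (row_edges k (m + 1) \<union> column_edges k m)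
     [0..<k] [m * k..<(m + 1) * k]"

definition two_paths :: "nat \<Rightarrow> nat blg" where
  "two_paths k = BLG {0..<2 * k} (row_edges k 2) [0..<k] [k..<2 * k]"

lemma Mgraph_eq_column_edges:
  "Mgraph k = BLG {0..<2 * k} (column_edges k 1) [0..<k] [k..<2 * k]"
  unfolding Mgraph_def stacked_edges_def by (auto simp: add.commute)

lemma Cgraph_edges_minus_ends:
  "bedges (Cgraph k) - {{0, k}, {k - 1, 2 * k - 1}} = row_edges k 2"
proof -
  have "{i, i + 1} \<in> row_edges k 2 \<longleftrightarrow> i + 1 < 2 * k \<and> i \<noteq> k - 1" for i
  proof
    assume "{i, i + 1} \<in> row_edges k 2"
    then show "i + 1 < 2 * k \<and> i \<noteq> k - 1"
      unfolding stacked_edges_def by (auto simp: doubleton_eq_iff less_2_cases_iff)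
  next
    assume "i + 1 < 2 * k \<and> i \<noteq> k - 1"
    then consider "i + 1 < k" | "k \<le> i" "i + 1 < 2 * k" by linarith
    then show "{i, i + 1} \<in> row_edges k 2"
    proof cases
      case 1
      then show ?thesis
        unfolding stacked_edges_def by (intro CollectI exI[of _ 0] exI[of _ i]) auto
    next
      case 2
      then show ?thesis
        unfolding stacked_edges_def by (intro CollectI exI[of _ 1] exI[of _ "i - k"]) auto
    qed
  qed
  then show ?thesis
    unfolding Cgraph_def stacked_edges_def by (auto simp: doubleton_eq_iff)
qed

lemma inQP_two_paths: "inQP k (two_paths k)"
proof -
  let ?C = "Cgraph k"
  let ?D = "bedges ?C \<inter> {{0, k}, {k - 1, 2 * k - 1}}"
  have "minor_step\<^sup>*\<^sup>* ?C (BLG (bverts ?C) (bedges ?C - ?D) (bin ?C) (bout ?C))"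
    by (rule minor_delete_edges) auto
  moreover have "bedges ?C - ?D = row_edges k 2"
    using Cgraph_edges_minus_ends by blast
  ultimately show ?thesis
    unfolding inQP_def by (intro bl_minorI) (simp add: Cgraph_def two_paths_def)
qed

lemma inP_Mgraph: "inP k (Mgraph k)"
  by (rule inP.base) (auto simp: inQS_def intro: bl_minorI)

lemma parallel_Mgraph_two_paths: "parallel (Mgraph k) (two_paths k) (grid_blg k 1)"
proof -
  let ?h = "case_sum id id :: nat + nat \<Rightarrow> nat"
  let ?V = "bverts (Mgraph k) <+> bverts (two_paths k)"
  let ?P = "set (zip (map Inl [0..<k]) (map Inr [0..<k]))
              \<union> set (zip (map Inl [k..<2 * k]) (map Inr [k..<2 * k]))"
  have P: "?P = (\<lambda>i. (Inl i, Inr i)) ` {..<2 * k}"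
  proof -
    have "{..<2 * k} = {..<k} \<union> (\<lambda>i. k + i) ` {..<k}"
      by (auto simp: image_iff)
        (metis add_diff_inverse_nat lessThan_iff mult_2 nat_add_left_cancel_less)
    then show ?thesis
      by (simp add: set_zip_Inl_Inr_upt image_Un image_image)
  qed
  have "glue (Mgraph k) (two_paths k) ?P (grid_blg k 1) ?h"
  proof (rule glue_matchingI)
    show "?P \<subseteq> range Inl \<times> range Inr" "single_valued ?P" "single_valued (?P\<inverse>)"
      unfolding P single_valued_def by auto
    show "bverts (grid_blg k 1) = ?h ` ?V"
      by (auto simp: grid_blg_def Mgraph_def two_paths_def Plus_def image_Un image_image)
    show "?h x = ?h y \<longleftrightarrow> x = y \<or> (x, y) \<in> ?P \<or> (y, x) \<in> ?P"
      if "x \<in> ?V" and "y \<in> ?V" for x y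
      using that unfolding P by (auto simp: Mgraph_def two_paths_def)
    show "bedges (grid_blg k 1)
            = image (?h \<circ> Inl) ` bedges (Mgraph k)
              \<union> image (?h \<circ> Inr) ` bedges (two_paths k)"
      by (simp add: grid_blg_def Mgraph_eq_column_edges two_paths_def Un_commute numeral_2_eq_2)
  qed
  then show ?thesis
    unfolding parallel_def
    by (intro exI[of _ ?h]) (simp add: Mgraph_def two_paths_def grid_blg_def map_idI mult_2)
qed

lemma series_grid_blg: "series (grid_blg k m) (grid_blg k n) (grid_blg k (m + n))"
proof -
  let ?h = "case_sum id ((+) (m * k)) :: nat + nat \<Rightarrow> nat"
  let ?V = "bverts (grid_blg k m) <+> bverts (grid_blg k n)"
  let ?P = "set (zip (map Inl [m * k..<(m + 1) * k]) (map Inr [0..<k]))"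
  have P: "?P = (\<lambda>i. (Inl (m * k + i), Inr i)) ` {..<k}"
    using set_zip_Inl_Inr_upt[of "(m + 1) * k" "m * k" k 0] by simp
  have "glue (grid_blg k m) (grid_blg k n) ?P (grid_blg k (m + n)) ?h"
  proof (rule glue_matchingI)
    show "?P \<subseteq> range Inl \<times> range Inr" "single_valued ?P" "single_valued (?P\<inverse>)"
      unfolding P single_valued_def by auto
    have "{0..<(m + n + 1) * k} = {0..<(m + 1) * k} \<union> (+) (m * k) ` {0..<(n + 1) * k}"
      by (auto simp: algebra_simps image_iff intro!: bexI[of _ "_ - m * k"])
    then show "bverts (grid_blg k (m + n)) = ?h ` ?V"
      by (simp add: grid_blg_def Plus_def image_Un image_image)
    show "?h x = ?h y \<longleftrightarrow> x = y \<or> (x, y) \<in> ?P \<or> (y, x) \<in> ?P"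
      if "x \<in> ?V" and "y \<in> ?V" for x y
      using that unfolding P by (auto simp: grid_blg_def)
    have "stacked_edges k w d (m + n + 1)
            = stacked_edges k w d (m + 1) \<union> image ((+) (m * k)) ` stacked_edges k w d (n + 1)"
      for w d
      using stacked_edges_add[of k w d m "n + 1"] stacked_edges_add[of k w d m 1]
        stacked_edges_mono[of m "m + 1" k w d] stacked_edges_mono[of "m + 1" "m + n + 1" k w d]
        stacked_edges_mono[of 1 "n + 1" k w d]
      by (auto simp: add.assoc)
    then show "bedges (grid_blg k (m + n))
                 = image (?h \<circ> Inl) ` bedges (grid_blg k m)
                   \<union> image (?h \<circ> Inr) ` bedges (grid_blg k n)"
      by (auto simp: grid_blg_def stacked_edges_add image_Un image_comp)
  qed
  moreover have "map ((+) (m * k)) [n * k..<(n + 1) * k] = [(m + n) * k..<(m + n + 1) * k]"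
    by (rule nth_equalityI) (auto simp: algebra_simps)
  ultimately show ?thesis
    unfolding series_def by (intro exI[of _ ?h]) (simp add: grid_blg_def comp_def)
qed

lemma inP_grid_blg_Suc: "inP k (grid_blg k (Suc m))"
proof -
  have one: "inP k (grid_blg k 1)"
    using inP.par[OF inP_Mgraph inQP_two_paths parallel_Mgraph_two_paths] .
  show ?thesis
  proof (induction m)
    case 0
    from one show ?case by simp
  next
    case (Suc m)
    from inP.ser[OF Suc.IH one series_grid_blg] show ?case by simp
  qed
qed

lemma inP_grid_blg_0:
  assumes "k \<le> 1"
  shows "inP k (grid_blg k 0)"
proof (cases "k = 0")
  case True
  then have "grid_blg k 0 = Mgraph k"
    by (simp add: grid_blg_def Mgraph_def stacked_edges_def)
  with inP_Mgraph show ?thesis by simp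
next
  case False
  with assms have k: "k = 1" by simp
  have M1: "Mgraph 1 = BLG {0, 1} {{0, 1}} [0] [1]"
    by (auto simp: Mgraph_def numeral_2_eq_2)
  then have "minor_step (Mgraph 1) (contract_edge (Mgraph 1) 0 1)"
    by (intro minor_step.contr) auto
  moreover have "contract_edge (Mgraph 1) 0 1 = grid_blg 1 0"
    using M1 by (auto simp: contract_edge_def grid_blg_def stacked_edges_def)
  ultimately have "minor_step (Mgraph 1) (grid_blg 1 0)" by simp
  then show ?thesis
    unfolding k by (intro inP.base disjI2) (simp add: inQS_def bl_minorI r_into_rtranclp)
qed

lemma bij_betw_div_mod:
  fixes k r :: nat
  shows "bij_betw (\<lambda>n. (n div k, n mod k)) {0..<r * k} ({0..<r} \<times> {0..<k})"
proof (rule bij_betw_byWitness[where f' = "\<lambda>(a, b). a * k + b"])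
  have "a * k + b < r * k" if "a < r" "b < k" for a b
  proof -
    have "a * k + b < (a + 1) * k" using that by simp
    also have "\<dots> \<le> r * k" using that by (intro mult_right_mono) auto
    finally show ?thesis .
  qed
  then show "(\<lambda>(a, b). a * k + b) ` ({0..<r} \<times> {0..<k}) \<subseteq> {0..<r * k}" by auto
  show "(\<lambda>n. (n div k, n mod k)) ` {0..<r * k} \<subseteq> {0..<r} \<times> {0..<k}"
    by (auto simp: less_mult_imp_div_less) (metis gr0I mod_less_divisor mult_0_right not_less_zero)
qed auto

lemma grid_edges_eq:
  "grid_edges k = {{(a, b), (a, b + 1)} | a b. a < k \<and> b + 1 < k}
                \<union> {{(a, b), (a + 1, b)} | a b. a + 1 < k \<and> b < k}"
  (is "_ = ?H \<union> ?V")
proof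
  show "grid_edges k \<subseteq> ?H \<union> ?V"
    unfolding grid_edges_def grid_verts_def by auto
  show "?H \<union> ?V \<subseteq> grid_edges k"
    unfolding grid_edges_def grid_verts_def by fastforce
qed

lemma grid_blg_square_iso:
  "bij_betw (\<lambda>n. (n div k, n mod k)) (bverts (grid_blg k (k - 1))) (grid_verts k)"
  "image (\<lambda>n. (n div k, n mod k)) ` bedges (grid_blg k (k - 1)) = grid_edges k"
proof -
  let ?f = "\<lambda>n. (n div k, n mod k)"
  have "(k - 1 + 1) * k = k * k" by (cases k) simp_all
  then show "bij_betw ?f (bverts (grid_blg k (k - 1))) (grid_verts k)"
    using bij_betw_div_mod[of k k] by (simp add: grid_blg_def grid_verts_def)
  have "image ?f ` bedges (grid_blg k (k - 1))
      = {{(a, b), (a, b + 1)} | a b. a < k - 1 + 1 \<and> b + 1 < k}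
      \<union> {{(a, b), (a + 1, b)} | a b. a < k - 1 \<and> b < k}"
    unfolding grid_blg_def blg.sel image_Un div_mod_row_edges div_mod_column_edges ..
  moreover have "a < k - 1 + 1 \<and> b + 1 < k \<longleftrightarrow> a < k \<and> b + 1 < k" for a b :: nat
    by linarith
  ultimately show "image ?f ` bedges (grid_blg k (k - 1)) = grid_edges k"
    unfolding grid_edges_eq by (simp add: less_diff_conv)
qed

theorem lemma4p10:
  fixes k :: nat
  shows "\<exists>F. inP k F \<and> (\<exists>f. bij_betw f (bverts F) (grid_verts k)
                            \<and> (image f) ` bedges F = grid_edges k)"
proof -
  have "inP k (grid_blg k (k - 1))"
  proof (cases "k \<le> 1")
    case True
    then show ?thesis using inP_grid_blg_0 by simp
  next
    case False
    then have "k - 1 = Suc (k - 2)" by simp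
    then show ?thesis using inP_grid_blg_Suc by metis
  qed
  with grid_blg_square_iso show ?thesis by blast
qed

end
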